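(* Let $M=M_0$ be a model set with $0\notin S$ and let $\Omega_M$ be its hull with the translation action of $\mathbb R^n$. Then $(\mathbb T,\mathbb R^n)$ together with the map $\mu:\Omega_M\to\mathbb T$ is the maximal equicontinuous factor of $(\Omega_M,\mathbb R^n)$, the minimal rank of $(\Omega_M,\mathbb R^n)$ is $1$, and two elements of $\Omega_M$ are proximal if and only if they have the same image under $\mu$.
   Context: Let $H$ be a locally compact abelian group with neutral element $e$ and $\Gamma\subset\mathbb R^n\times H$ a lattice (discrete co-compact subgroup). Let $\pi^\|,\pi^\perp$ be the projections of $\mathbb R^n\times H$ onto $\mathbb R^n$ and $H$; assume their restrictions to $\Gamma$ are injective with dense image. Let $K\subset H$ be compact, the closure of its interior, with trivial stabilizer ($h+K=K\Rightarrow h=e$). For $x\in\mathbb R^n\times H$ let $M_x=\{\pi^\|(\gamma+x):\gamma\in\Gamma,\ \pi^\perp(\gamma+x)\in K\}\subset\mathbb R^n$ (a model set). The singular set is $S=\{x:\pi^\perp(x)\in\partial K+\pi^\perp(\Gamma)\}$ and $NS$ its complement. The hull $\Omega_M$ is the closure of the translates $M-v$ in the local (Delone set) topology. $\mathbb T=(\mathbb R^n\times H)/\Gamma$ with the action $v\cdot(x+\Gamma)=(x+(v,e))+\Gamma$. It is known that the map $M_x\mapsto x+\Gamma$ ($x\in NS$) extends to a continuous surjective $\mathbb R^n$-equivariant map $\mu:\Omega_M\to\mathbb T$ which is one-to-one precisely over $NS/\Gamma$. Two Delone sets are proximal if $\inf_v d(L-v,L'-v)=0$ for a metric $d$ compatible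 with the local topology. The minimal rank is $\inf_x\#\pi_{max}^{-1}(x)$ for the maximal equicontinuous factor $\pi_{max}$. *)

theory Defs
  imports "HOL-Analysis.Analysis" "HOL-Library.Extended_Nat"
begin

text \<open>Model set M_x for a point x of R^n x H (R^n is an abstract euclidean space 'v).\<close>
definition model_set :: "('v::euclidean_space \<times> 'h::ab_group_add) set \<Rightarrow> 'h set \<Rightarrow> 'v \<times> 'h \<Rightarrow> 'v set" where
  "model_set \<Gamma> K x = {fst (\<gamma> + x) | \<gamma>. \<gamma> \<in> \<Gamma> \<and> snd (\<gamma> + x) \<in> K}"

definition singular_set :: "('v::euclidean_space \<times> 'h::{ab_group_add,topological_space}) set \<Rightarrow> 'h set \<Rightarrow> ('v \<times> 'h) set" where
  "singular_set \<Gamma> K = {x. \<exists>a\<in>frontier K. \<exists>\<gamma>\<in>\<Gamma>. snd x = a + snd \<gamma>}"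

definition coset :: "('a::ab_group_add) set \<Rightarrow> 'a \<Rightarrow> 'a set" where
  "coset \<Gamma> x = (\<lambda>\<gamma>. x + \<gamma>) ` \<Gamma>"

text \<open>Quotient topology on the torus (R^n x H)/Gamma, points being cosets.\<close>
definition torus_topology :: "('a::{ab_group_add,topological_space}) set \<Rightarrow> 'a set topology" where
  "torus_topology \<Gamma> = topology (\<lambda>U. U \<subseteq> range (coset \<Gamma>) \<and> open (coset \<Gamma> -` U))"

lemma istopology_torus:
  "istopology (\<lambda>U. U \<subseteq> range (coset \<Gamma>) \<and> open (coset \<Gamma> -` (U::'a::{ab_group_add,topological_space} set set)))"
  unfolding istopology_def
proof (rule conjI)
  show "\<forall>S T. S \<subseteq> range (coset \<Gamma>) \<and> open (coset \<Gamma> -` S) \<longrightarrow>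
     T \<subseteq> range (coset \<Gamma>) \<and> open (coset \<Gamma> -` T) \<longrightarrow>
     S \<inter> T \<subseteq> range (coset \<Gamma>) \<and> open (coset \<Gamma> -` (S \<inter> T))"
    unfolding vimage_Int by (intro allI impI conjI open_Int; elim conjE; (erule le_infI1)?)
  show "\<forall>KK. (\<forall>K\<in>KK. K \<subseteq> range (coset \<Gamma>) \<and> open (coset \<Gamma> -` K)) \<longrightarrow>
     \<Union>KK \<subseteq> range (coset \<Gamma>) \<and> open (coset \<Gamma> -` \<Union>KK)"
  proof (intro allI impI)
    fix KK :: "'a set set set"
    assume h: "\<forall>K\<in>KK. K \<subseteq> range (coset \<Gamma>) \<and> open (coset \<Gamma> -` K)"
    have e: "coset \<Gamma> -` \<Union>KK = (\<Union>K\<in>KK. coset \<Gamma> -` K)" by blast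
    have "open (\<Union>K\<in>KK. coset \<Gamma> -` K)" by (rule open_UN) (use h in simp)
    moreover have "\<Union>KK \<subseteq> range (coset \<Gamma>)" by (rule Sup_least) (use h in simp)
    ultimately show "\<Union>KK \<subseteq> range (coset \<Gamma>) \<and> open (coset \<Gamma> -` \<Union>KK)" using e by simp
  qed
qed

definition torus_act :: "'v::euclidean_space \<Rightarrow> ('v \<times> 'h::ab_group_add) set \<Rightarrow> ('v \<times> 'h) set" where
  "torus_act v c = (\<lambda>p. p + (v, 0)) ` c"

definition loc_close :: "real \<Rightarrow> real \<Rightarrow> 'v::euclidean_space set \<Rightarrow> 'v set \<Rightarrow> bool" where
  "loc_close R \<epsilon> L L' \<longleftrightarrow> (\<exists>t. norm t < \<epsilon> \<and> ((\<lambda>p. p + t) ` L) \<inter> ball 0 R = L' \<inter> ball 0 R)"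

definition loc_open :: "'v::euclidean_space set set \<Rightarrow> bool" where
  "loc_open U \<longleftrightarrow> (\<forall>L\<in>U. \<exists>R>0. \<exists>\<epsilon>>0. {L'. loc_close R \<epsilon> L L'} \<subseteq> U)"

lemma loc_close_mono:
  fixes L L' :: "'v::euclidean_space set"
  assumes "loc_close R \<epsilon> L L'" "R' \<le> R" "\<epsilon> \<le> \<epsilon>'"
  shows "loc_close R' \<epsilon>' L L'"
proof -
  from assms(1) obtain t where t: "norm t < \<epsilon>" "((\<lambda>p. p + t) ` L) \<inter> ball 0 R = L' \<inter> ball 0 R"
    unfolding loc_close_def by blast
  have "ball 0 R' \<subseteq> ball 0 R" using assms(2) by auto
  then have "((\<lambda>p. p + t) ` L) \<inter> ball 0 R' = L' \<inter> ball 0 R'" using t(2) by blast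
  moreover have "norm t < \<epsilon>'" using t(1) assms(3) by linarith
  ultimately show ?thesis unfolding loc_close_def by blast
qed

lemma istopology_loc_open: "istopology (loc_open :: 'v::euclidean_space set set \<Rightarrow> bool)"
  unfolding istopology_def
proof (rule conjI)
  show "\<forall>S T. loc_open S \<longrightarrow> loc_open T \<longrightarrow> loc_open (S \<inter> (T::'v set set))"
  proof (intro allI impI)
    fix S T :: "'v set set"
    assume S: "loc_open S" and T: "loc_open T"
    show "loc_open (S \<inter> T)"
      unfolding loc_open_def
    proof
      fix L assume L: "L \<in> S \<inter> T"
      from L S obtain R1 e1 where 1: "R1 > 0" "e1 > 0" "{L'. loc_close R1 e1 L L'} \<subseteq> S"
        unfolding loc_open_def by auto
      from L T obtain R2 e2 where 2: "R2 > 0" "e2 > 0" "{L'. loc_close R2 e2 L L'} \<subseteq> T"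
        unfolding loc_open_def by auto
      have "{L'. loc_close (max R1 R2) (min e1 e2) L L'} \<subseteq> S \<inter> T"
      proof
        fix L' assume "L' \<in> {L'. loc_close (max R1 R2) (min e1 e2) L L'}"
        then have c: "loc_close (max R1 R2) (min e1 e2) L L'" by simp
        have "loc_close R1 e1 L L'" by (rule loc_close_mono[OF c]) auto
        moreover have "loc_close R2 e2 L L'" by (rule loc_close_mono[OF c]) auto
        ultimately show "L' \<in> S \<inter> T" using 1(3) 2(3) by blast
      qed
      moreover have "max R1 R2 > 0" "min e1 e2 > 0" using 1 2 by auto
      ultimately show "\<exists>R>0. \<exists>\<epsilon>>0. {L'. loc_close R \<epsilon> L L'} \<subseteq> S \<inter> T" by blast
    qed
  qed
  show "\<forall>KK. (\<forall>K\<in>KK. loc_open K) \<longrightarrow> loc_open (\<Union>(KK::'v set set set))"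
  proof (intro allI impI)
    fix KK :: "'v set set set"
    assume h: "\<forall>K\<in>KK. loc_open K"
    show "loc_open (\<Union>KK)"
      unfolding loc_open_def
    proof
      fix L assume "L \<in> \<Union>KK"
      then obtain K where K: "K \<in> KK" "L \<in> K" by (rule UnionE)
      then have "loc_open K" using h by simp
      then obtain R e where "R > 0" "e > 0" "{L'. loc_close R e L L'} \<subseteq> K"
        using K(2) unfolding loc_open_def by auto
      moreover have "K \<subseteq> \<Union>KK" using K(1) by (rule Union_upper)
      ultimately show "\<exists>R>0. \<exists>\<epsilon>>0. {L'. loc_close R \<epsilon> L L'} \<subseteq> \<Union>KK"
        by (meson order_trans)
    qed
  qed
qed

definition local_topology :: "'v::euclidean_space set topology" where
  "local_topology = topology loc_open"

definition dhull :: "'v::euclidean_space set \<Rightarrow> 'v set set" where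
  "dhull L = local_topology closure_of range (\<lambda>v. (\<lambda>p. p - v) ` L)"

definition set_act :: "'v::euclidean_space \<Rightarrow> 'v set \<Rightarrow> 'v set" where
  "set_act v L = (\<lambda>p. p + v) ` L"

definition dyn_sys :: "'a topology \<Rightarrow> ('v::euclidean_space \<Rightarrow> 'a \<Rightarrow> 'a) \<Rightarrow> bool" where
  "dyn_sys X act \<longleftrightarrow> compact_space X \<and> Hausdorff_space X
     \<and> (\<forall>v. \<forall>x\<in>topspace X. act v x \<in> topspace X)
     \<and> continuous_map (prod_topology euclidean X) X (\<lambda>(v, x). act v x)
     \<and> (\<forall>x\<in>topspace X. act 0 x = x)
     \<and> (\<forall>u v. \<forall>x\<in>topspace X. act (u + v) x = act u (act v x))"

text \<open>Equicontinuity w.r.t. the unique uniformity of a compact Hausdorff space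
  (entourages = neighbourhoods of the diagonal).\<close>
definition equicontinuous :: "'a topology \<Rightarrow> ('v \<Rightarrow> 'a \<Rightarrow> 'a) \<Rightarrow> bool" where
  "equicontinuous X act \<longleftrightarrow>
    (\<forall>W. openin (prod_topology X X) W \<and> (\<forall>x\<in>topspace X. (x, x) \<in> W) \<longrightarrow>
      (\<exists>V. openin (prod_topology X X) V \<and> (\<forall>x\<in>topspace X. (x, x) \<in> V) \<and>
         (\<forall>v. \<forall>(x, y)\<in>V. (act v x, act v y) \<in> W)))"

definition factor_map :: "'a topology \<Rightarrow> ('v \<Rightarrow> 'a \<Rightarrow> 'a) \<Rightarrow> 'b topology \<Rightarrow> ('v \<Rightarrow> 'b \<Rightarrow> 'b) \<Rightarrow> ('a \<Rightarrow> 'b) \<Rightarrow> bool" where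
  "factor_map X actX Y actY f \<longleftrightarrow> continuous_map X Y f \<and> f ` topspace X = topspace Y
     \<and> (\<forall>v. \<forall>x\<in>topspace X. f (actX v x) = actY v (f x))"

text \<open>(Y, actY) with pi is the maximal equicontinuous factor of (X, actX); the maximality
  is required against every equicontinuous factor carried by the type 'z (a free type
  variable in the theorem, hence arbitrary).\<close>
definition max_equicont_factor ::
  "'z itself \<Rightarrow> 'a topology \<Rightarrow> ('v::euclidean_space \<Rightarrow> 'a \<Rightarrow> 'a) \<Rightarrow> 'b topology \<Rightarrow> ('v \<Rightarrow> 'b \<Rightarrow> 'b) \<Rightarrow> ('a \<Rightarrow> 'b) \<Rightarrow> bool" where
  "max_equicont_factor (_::'z itself) X actX Y actY \<pi> \<longleftrightarrow>
     dyn_sys Y actY \<and> equicontinuous Y actY \<and> factor_map X actX Y actY \<pi> \<and>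
     (\<forall>(Z::'z topology) actZ \<rho>. dyn_sys Z actZ \<and> equicontinuous Z actZ \<and> factor_map X actX Z actZ \<rho>
        \<longrightarrow> (\<exists>f. factor_map Y actY Z actZ f \<and> (\<forall>x\<in>topspace X. \<rho> x = f (\<pi> x))))"

definition ecard :: "'a set \<Rightarrow> enat" where
  "ecard A = (if finite A then enat (card A) else \<infinity>)"

definition minimal_rank :: "'a topology \<Rightarrow> 'b topology \<Rightarrow> ('a \<Rightarrow> 'b) \<Rightarrow> enat" where
  "minimal_rank X Y \<pi> = (INF y\<in>topspace Y. ecard {x\<in>topspace X. \<pi> x = y})"

text \<open>Proximality (uniform version; for compact metric spaces equivalent to
  inf_v d(v.x, v.y) = 0 for any compatible metric d).\<close>
definition proximal :: "'a topology \<Rightarrow> ('v \<Rightarrow> 'a \<Rightarrow> 'a) \<Rightarrow> 'a \<Rightarrow> 'a \<Rightarrow> bool" where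
  "proximal X act x y \<longleftrightarrow>
    (\<forall>W. openin (prod_topology X X) W \<and> (\<forall>z\<in>topspace X. (z, z) \<in> W) \<longrightarrow>
       (\<exists>v. (act v x, act v y) \<in> W))"

end

theory Submission
  imports Defs
begin

text \<open>
  The argument isolates one dynamical property of \<open>\<mu>\<close>: \<open>M\<close> is a uniform return point, i.e.
  every point of the torus has a neighbourhood \<open>T\<close> and a single \<open>v \<in> \<real>\<^sup>n\<close> moving all of
  \<open>\<mu>\<^sup>-\<^sup>1(T)\<close> into a given neighbourhood of \<open>M\<close>.  For abstract systems we prove that a factor map
  onto an equicontinuous system with a uniform return point is the maximal equicontinuous
  factor and identifies proximal pairs; a singleton fibre gives minimal rank one.

  The concrete part establishes: the torus is a compact Hausdorff equicontinuous \<open>\<real>\<^sup>n\<close>-system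
  (the lattice is closed and discrete; equicontinuity via the tube lemma), the window is
  locally stable around the finitely many relevant lattice points because \<open>0 \<notin> S\<close>, hence
  \<open>\<mu> L\<close> near \<open>0 + \<Gamma>\<close> forces \<open>L\<close> near \<open>M\<close>, and density of the internal projection of \<open>\<Gamma>\<close>
  turns this into the uniform return property.  The fibre over \<open>0 + \<Gamma>\<close> is \<open>{M}\<close> by
  injectivity of \<open>\<mu>\<close> over nonsingular points.
\<close>

section \<open>Topological groups\<close>

text \<open>The product of two topological groups is a topological group (the library provides this
  only for normed spaces); in particular \<open>\<real>\<^sup>n \<times> H\<close> is one.\<close>
instance prod :: (topological_monoid_add, topological_monoid_add) topological_monoid_add
proof
  fix a b :: "'a \<times> 'b"
  have "((\<lambda>x. (fst (fst x) + fst (snd x), snd (fst x) + snd (snd x))) \<longlongrightarrow>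
          (fst a + fst b, snd a + snd b)) (nhds a \<times>\<^sub>F nhds b)"
    by (intro tendsto_Pair tendsto_add tendsto_fst tendsto_snd
        filterlim_compose[OF _ filterlim_fst] filterlim_compose[OF _ filterlim_snd] filterlim_ident)
  then show "((\<lambda>x. fst x + snd x) \<longlongrightarrow> a + b) (nhds a \<times>\<^sub>F nhds b)"
    by (simp add: plus_prod_def case_prod_beta)
qed

instance prod :: (topological_group_add, topological_group_add) topological_group_add
proof
  fix a :: "'a \<times> 'b"
  have "((\<lambda>x. (- fst x, - snd x)) \<longlongrightarrow> (- fst a, - snd a)) (nhds a)"
    by (intro tendsto_Pair tendsto_minus tendsto_fst tendsto_snd filterlim_ident)
  moreover have "uminus = (\<lambda>x::'a \<times> 'b. (- fst x, - snd x))"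
    by (simp add: fun_eq_iff prod_eq_iff)
  moreover have "- a = (- fst a, - snd a)"
    by (simp add: prod_eq_iff)
  ultimately show "(uminus \<longlongrightarrow> - a) (nhds a)"
    by metis
qed

instance prod :: (topological_ab_group_add, topological_ab_group_add) topological_ab_group_add ..

text \<open>Translations are homeomorphisms, so shifted open sets are open.\<close>
lemma open_shift:
  fixes P :: "'g::topological_group_add set"
  assumes "open P"
  shows "open {u. u + a \<in> P}"
  using open_vimage[OF assms, of "\<lambda>u. u + a"] by (simp add: vimage_def continuous_intros)

lemma open_image_shift:
  fixes U :: "'g::topological_group_add set"
  assumes "open U"
  shows "open ((\<lambda>y. y + a) ` U)"
proof -
  have "(\<lambda>y. y + a) ` U = {u. u + - a \<in> U}"
  proof (intro set_eqI iffI)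
    fix y assume "y \<in> {u. u + - a \<in> U}"
    then show "y \<in> (\<lambda>y. y + a) ` U" by (intro image_eqI[of _ _ "y + - a"]) (simp_all add: add.assoc)
  qed (auto simp: add.assoc)
  then show ?thesis using open_shift[OF assms, of "- a"] by (simp only:)
qed

lemma continuous_binop_nbhds:
  fixes f :: "'a::topological_space \<Rightarrow> 'b::topological_space \<Rightarrow> 'c::topological_space"
  assumes "continuous_on UNIV (\<lambda>p. f (fst p) (snd p))" "open D" "f a b \<in> D"
  obtains A B where "open A" "open B" "a \<in> A" "b \<in> B" "\<And>x y. x \<in> A \<Longrightarrow> y \<in> B \<Longrightarrow> f x y \<in> D"
proof -
  have "open ((\<lambda>p. f (fst p) (snd p)) -` D)" "(a, b) \<in> (\<lambda>p. f (fst p) (snd p)) -` D"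
    using assms by (auto intro: open_vimage)
  then obtain A B where AB: "open A" "open B" "(a, b) \<in> A \<times> B"
      and sub: "A \<times> B \<subseteq> (\<lambda>p. f (fst p) (snd p)) -` D"
    by (rule open_prod_elim)
  show ?thesis
  proof (rule that)
    show "f x y \<in> D" if "x \<in> A" "y \<in> B" for x y using sub that by auto
  qed (use AB in auto)
qed

lemma diff_nbhds:
  fixes D :: "'g::topological_group_add set"
  assumes "open D" "a - b \<in> D"
  obtains A B where "open A" "open B" "a \<in> A" "b \<in> B" "\<And>x y. x \<in> A \<Longrightarrow> y \<in> B \<Longrightarrow> x - y \<in> D"
proof -
  have "continuous_on UNIV (\<lambda>p::'g \<times> 'g. fst p - snd p)" by (intro continuous_intros)
  then show thesis using that by (rule continuous_binop_nbhds[of "(-)", OF _ assms])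
qed

lemma add_nbhds:
  fixes D :: "'g::topological_monoid_add set"
  assumes "open D" "a + b \<in> D"
  obtains A B where "open A" "open B" "a \<in> A" "b \<in> B" "\<And>x y. x \<in> A \<Longrightarrow> y \<in> B \<Longrightarrow> x + y \<in> D"
proof -
  have "continuous_on UNIV (\<lambda>p::'g \<times> 'g. fst p + snd p)" by (intro continuous_intros)
  then show thesis using that by (rule continuous_binop_nbhds[of "(+)", OF _ assms])
qed

section \<open>The local topology on subsets of \<open>\<real>\<^sup>n\<close>\<close>

lemma openin_local: "openin local_topology = loc_open"
  unfolding local_topology_def by (rule topology_inverse'[OF istopology_loc_open])

lemma topspace_local: "topspace local_topology = UNIV"
proof -
  have "loc_open (UNIV :: 'a::euclidean_space set set)"
    unfolding loc_open_def by (auto intro!: exI[of _ 1])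
  then show ?thesis by (metis openin_local openin_subset top.extremum_uniqueI)
qed

lemma mem_image_shift: "x \<in> (\<lambda>p. p + t) ` A \<longleftrightarrow> x - t \<in> (A::'a::ab_group_add set)"
proof
  assume "x - t \<in> A"
  then show "x \<in> (\<lambda>p. p + t) ` A" by (intro image_eqI[of _ _ "x - t"]) simp_all
qed auto

lemma set_act_mem: "x \<in> set_act v L \<longleftrightarrow> x - v \<in> L"
  unfolding set_act_def by (rule mem_image_shift)

lemma loc_close_iff:
  "loc_close R \<epsilon> L L' \<longleftrightarrow> (\<exists>t. norm t < \<epsilon> \<and> (\<forall>x. norm x < R \<longrightarrow> (x - t \<in> L \<longleftrightarrow> x \<in> L')))"
  unfolding loc_close_def by (intro iff_exI conj_cong refl) (auto simp: mem_image_shift set_eq_iff)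

lemma loc_close_sym:
  assumes "loc_close R \<epsilon> L L'"
  shows "loc_close (R - \<epsilon>) \<epsilon> L' L"
proof -
  obtain t where t: "norm t < \<epsilon>" "\<And>x. norm x < R \<Longrightarrow> x - t \<in> L \<longleftrightarrow> x \<in> L'"
    using assms unfolding loc_close_iff by blast
  have "x - - t \<in> L' \<longleftrightarrow> x \<in> L" if "norm x < R - \<epsilon>" for x
  proof -
    have "norm (x + t) < R" using norm_triangle_ineq[of x t] that t(1) by linarith
    then show ?thesis using t(2)[of "x + t"] by simp
  qed
  then show ?thesis unfolding loc_close_iff using t(1) by (intro exI[of _ "- t"]) auto
qed

lemma loc_close_trans:
  assumes "loc_close R1 \<epsilon>1 A B" "loc_close R2 \<epsilon>2 B C" "R2 + \<epsilon>2 \<le> R1"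
  shows "loc_close R2 (\<epsilon>1 + \<epsilon>2) A C"
proof -
  obtain t1 where t1: "norm t1 < \<epsilon>1" "\<And>x. norm x < R1 \<Longrightarrow> x - t1 \<in> A \<longleftrightarrow> x \<in> B"
    using assms(1) unfolding loc_close_iff by blast
  obtain t2 where t2: "norm t2 < \<epsilon>2" "\<And>x. norm x < R2 \<Longrightarrow> x - t2 \<in> B \<longleftrightarrow> x \<in> C"
    using assms(2) unfolding loc_close_iff by blast
  have "x - (t1 + t2) \<in> A \<longleftrightarrow> x \<in> C" if x: "norm x < R2" for x
  proof -
    have "norm (x - t2) < R1" using norm_triangle_ineq4[of x t2] x t2(1) assms(3) by linarith
    then show ?thesis using t1(2)[of "x - t2"] t2(2)[OF x] by (simp add: algebra_simps)
  qed
  moreover have "norm (t1 + t2) < \<epsilon>1 + \<epsilon>2" using norm_triangle_ineq[of t1 t2] t1(1) t2(1) by linarith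
  ultimately show ?thesis unfolding loc_close_iff by blast
qed

lemma open_cylinder:
  fixes L :: "'a::euclidean_space set"
  assumes "R > 0" "\<epsilon> > 0"
  shows "\<exists>U. openin local_topology U \<and> L \<in> U \<and> U \<subseteq> {L'. loc_close R \<epsilon> L L'}"
proof -
  define U where "U = {L'. \<exists>r>0. r < \<epsilon> \<and> loc_close (R + r) (\<epsilon> - r) L L'}"
  have "L \<in> U" unfolding U_def loc_close_iff using assms
    by (intro CollectI exI[of _ "\<epsilon>/2"] conjI exI[of _ 0]) auto
  moreover have "U \<subseteq> {L'. loc_close R \<epsilon> L L'}"
    unfolding U_def by (auto elim: loc_close_mono)
  moreover have "loc_open U"
    unfolding loc_open_def
  proof
    fix L' assume "L' \<in> U"
    then obtain r where r: "r > 0" "r < \<epsilon>" "loc_close (R + r) (\<epsilon> - r) L L'"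
      unfolding U_def by blast
    have "{L''. loc_close (R + r) (r/2) L' L''} \<subseteq> U"
    proof
      fix L'' assume "L'' \<in> {L''. loc_close (R + r) (r/2) L' L''}"
      then have "loc_close (R + r) (r/2) L' L''" by simp
      then have "loc_close (R + r/2) (r/2) L' L''"
        by (rule loc_close_mono) (use r(1) in auto)
      then have "loc_close (R + r/2) (\<epsilon> - r + r/2) L L''"
        by (rule loc_close_trans[OF r(3)]) simp
      then show "L'' \<in> U" unfolding U_def using r
        by (intro CollectI exI[of _ "r/2"]) (auto simp: algebra_simps)
    qed
    then show "\<exists>R>0. \<exists>\<epsilon>>0. {L'a. loc_close R \<epsilon> L' L'a} \<subseteq> U"
      using assms r(1) by (intro exI[of _ "R + r"] conjI exI[of _ "r/2"]) auto
  qed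
  ultimately show ?thesis unfolding openin_local by blast
qed

lemma loc_close_act:
  fixes v :: "'a::euclidean_space"
  assumes "loc_close (R + norm v) \<epsilon> L L'"
  shows "loc_close R \<epsilon> (set_act v L) (set_act v L')"
proof -
  obtain t where t: "norm t < \<epsilon>" "\<And>x. norm x < R + norm v \<Longrightarrow> x - t \<in> L \<longleftrightarrow> x \<in> L'"
    using assms unfolding loc_close_iff by blast
  have "x - t \<in> set_act v L \<longleftrightarrow> x \<in> set_act v L'" if x: "norm x < R" for x
  proof -
    have "norm (x - v) < R + norm v" using norm_triangle_ineq4[of x v] x by linarith
    then show ?thesis using t(2)[of "x - v"] unfolding set_act_mem by (simp add: algebra_simps)
  qed
  then show ?thesis unfolding loc_close_iff using t(1) by blast
qed

lemma set_act_continuous: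
  "continuous_map (local_topology :: 'a::euclidean_space set topology) local_topology (set_act v)"
  unfolding continuous_map_def topspace_local openin_local
proof (intro conjI allI impI)
  fix U :: "'a set set" assume U: "loc_open U"
  show "loc_open {x \<in> UNIV. set_act v x \<in> U}"
    unfolding loc_open_def
  proof
    fix L assume "L \<in> {x \<in> UNIV. set_act v x \<in> U}"
    then obtain R e where Re: "R > 0" "e > 0" "{L'. loc_close R e (set_act v L) L'} \<subseteq> U"
      using U unfolding loc_open_def by auto
    have "{L'. loc_close (R + norm v) e L L'} \<subseteq> {x \<in> UNIV. set_act v x \<in> U}"
      using Re(3) loc_close_act by blast
    then show "\<exists>R>0. \<exists>\<epsilon>>0. {L'. loc_close R \<epsilon> L L'} \<subseteq> {x \<in> UNIV. set_act v x \<in> U}"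
      using Re(1,2) by (intro exI[of _ "R + norm v"]) (auto intro: add_pos_nonneg)
  qed
qed auto

lemma dhull_act:
  assumes "L \<in> dhull N"
  shows "set_act v L \<in> dhull N"
proof -
  define Orb where "Orb = range (\<lambda>u. (\<lambda>p. p - u) ` N)"
  have orbit: "set_act v ` Orb \<subseteq> Orb"
  proof
    fix L' assume "L' \<in> set_act v ` Orb"
    then obtain u where "L' = set_act v ((\<lambda>p. p - u) ` N)" unfolding Orb_def by blast
    then have "L' = (\<lambda>p. p - (u - v)) ` N" by (simp add: set_act_def image_image algebra_simps)
    then show "L' \<in> Orb" unfolding Orb_def by blast
  qed
  have "set_act v ` (local_topology closure_of Orb) \<subseteq> local_topology closure_of (set_act v ` Orb)"
    by (rule continuous_map_image_closure_subset[OF set_act_continuous])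
  also have "\<dots> \<subseteq> local_topology closure_of Orb"
    by (rule closure_of_mono[OF orbit])
  finally show ?thesis using assms unfolding dhull_def Orb_def by blast
qed

lemma dhull_self: "N \<in> dhull N"
proof -
  have "N \<in> range (\<lambda>u. (\<lambda>p. p - u) ` N)" by (intro range_eqI[of _ _ 0]) simp
  moreover have "range (\<lambda>u. (\<lambda>p. p - u) ` N) \<subseteq> local_topology closure_of range (\<lambda>u. (\<lambda>p. p - u) ` N)"
    by (rule closure_of_subset) (simp add: topspace_local)
  ultimately show ?thesis unfolding dhull_def by blast
qed

lemma cylinder_in_open:
  assumes "openin (subtopology local_topology S) A" "L \<in> A"
  shows "\<exists>R>0. \<exists>\<epsilon>>0. \<forall>L'\<in>S. loc_close R \<epsilon> L L' \<longrightarrow> L' \<in> A"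
proof -
  obtain U where U: "loc_open U" "A = U \<inter> S"
    using assms(1) unfolding openin_subtopology openin_local by blast
  then obtain R \<epsilon> where "R > 0" "\<epsilon> > 0" "{L'. loc_close R \<epsilon> L L'} \<subseteq> U"
    using assms(2) unfolding loc_open_def by blast
  then show ?thesis using U(2) by blast
qed

section \<open>Abstract topological dynamics\<close>

lemma dyn_sys_inverse:
  assumes "dyn_sys Z act" "z \<in> topspace Z"
  shows "act (- v) (act v z) = z"
  using assms unfolding dyn_sys_def by (metis add.left_inverse)

text \<open>Factor maps send proximal pairs to proximal pairs: pull an entourage back along the map.\<close>
lemma proximal_factor:
  assumes f: "factor_map X actX Y actY f" and p: "proximal X actX a b"
    and ab: "a \<in> topspace X" "b \<in> topspace X"
  shows "proximal Y actY (f a) (f b)"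
  unfolding proximal_def
proof (intro allI impI, elim conjE)
  fix W assume W: "openin (prod_topology Y Y) W" and diag: "\<forall>z\<in>topspace Y. (z, z) \<in> W"
  have cf: "continuous_map X Y f" using f unfolding factor_map_def by blast
  define W' where "W' = {p \<in> topspace (prod_topology X X). (f (fst p), f (snd p)) \<in> W}"
  have "continuous_map (prod_topology X X) (prod_topology Y Y) (\<lambda>p. (f (fst p), f (snd p)))"
    using cf by (auto intro!: continuous_map_pairedI
        simp: continuous_map_of_fst[unfolded o_def] continuous_map_of_snd[unfolded o_def])
  then have "openin (prod_topology X X) W'"
    unfolding W'_def using W by (rule openin_continuous_map_preimage)
  moreover have "\<forall>z\<in>topspace X. (z, z) \<in> W'"
    unfolding W'_def using diag cf by (auto simp: continuous_map_def)
  ultimately obtain v where "(actX v a, actX v b) \<in> W'"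
    using p unfolding proximal_def by blast
  moreover have "f (actX v a) = actY v (f a)" "f (actX v b) = actY v (f b)"
    using f ab unfolding factor_map_def by auto
  ultimately show "\<exists>v. (actY v (f a), actY v (f b)) \<in> W"
    unfolding W'_def by auto
qed

text \<open>In an equicontinuous system proximal points coincide: the complement of a non-diagonal
  point is an entourage, and equicontinuity lets one translate back.\<close>
lemma proximal_equicontinuous_eq:
  assumes ds: "dyn_sys Y act" and eq: "equicontinuous Y act" and p: "proximal Y act a b"
    and ab: "a \<in> topspace Y" "b \<in> topspace Y"
  shows "a = b"
proof (rule ccontr)
  assume ne: "a \<noteq> b"
  have "Hausdorff_space Y" using ds unfolding dyn_sys_def by blast
  then have "closedin (prod_topology Y Y) {(a, b)}"
    using ab by (simp add: closedin_Hausdorff_singleton Hausdorff_space_prod_topology)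
  then have W: "openin (prod_topology Y Y) (topspace Y \<times> topspace Y - {(a, b)})"
    using openin_diff[OF openin_topspace] by fastforce
  have diag: "\<forall>x\<in>topspace Y. (x, x) \<in> topspace Y \<times> topspace Y - {(a, b)}" using ne by blast
  obtain V where V: "openin (prod_topology Y Y) V \<and> (\<forall>x\<in>topspace Y. (x, x) \<in> V) \<and>
      (\<forall>v. \<forall>(x, y)\<in>V. (act v x, act v y) \<in> topspace Y \<times> topspace Y - {(a, b)})"
    using eq[unfolded equicontinuous_def, rule_format, OF conjI[OF W diag]] by blast
  then have avoids: "\<And>v x y. (x, y) \<in> V \<Longrightarrow> (act v x, act v y) \<noteq> (a, b)" by fast
  obtain v where "(act v a, act v b) \<in> V"
    using p[unfolded proximal_def, rule_format] V by blast
  then have "(act (- v) (act v a), act (- v) (act v b)) \<noteq> (a, b)" by (rule avoids)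
  then show False using dyn_sys_inverse[OF ds] ab by simp
qed

text \<open>For model sets \<open>m = M\<close> itself is such a point.\<close>
definition uniform_return :: "'a topology \<Rightarrow> ('v \<Rightarrow> 'a \<Rightarrow> 'a) \<Rightarrow> 'b topology \<Rightarrow> ('a \<Rightarrow> 'b) \<Rightarrow> 'a \<Rightarrow> bool" where
  "uniform_return X act Y \<pi> m \<longleftrightarrow>
     (\<forall>A. openin X A \<and> m \<in> A \<longrightarrow> (\<forall>c\<in>topspace Y. \<exists>T v. openin Y T \<and> c \<in> T \<and>
        (\<forall>x\<in>topspace X. \<pi> x \<in> T \<longrightarrow> act v x \<in> A)))"

text \<open>Points in the same fibre are moved simultaneously close to \<open>m\<close>, hence are proximal.\<close>
lemma uniform_return_proximal:
  assumes ret: "uniform_return X act Y \<pi> m" "m \<in> topspace X"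
    and \<pi>: "\<pi> ` topspace X \<subseteq> topspace Y"
    and xy: "x \<in> topspace X" "y \<in> topspace X" "\<pi> x = \<pi> y"
  shows "proximal X act x y"
  unfolding proximal_def
proof (intro allI impI, elim conjE)
  fix W assume W: "openin (prod_topology X X) W" and diag: "\<forall>z\<in>topspace X. (z, z) \<in> W"
  have "(m, m) \<in> W" using diag ret(2) by blast
  then obtain A B where AB: "openin X A" "openin X B" "m \<in> A" "m \<in> B" "A \<times> B \<subseteq> W"
    using W unfolding openin_prod_topology_alt by meson
  have AB': "openin X (A \<inter> B) \<and> m \<in> A \<inter> B" and \<pi>x: "\<pi> x \<in> topspace Y"
    using AB \<pi> xy(1) by auto
  obtain T v where "\<pi> x \<in> T" "\<forall>z\<in>topspace X. \<pi> z \<in> T \<longrightarrow> act v z \<in> A \<inter> B"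
    using ret(1)[unfolded uniform_return_def, rule_format, OF AB' \<pi>x] by blast
  then have "act v x \<in> A" "act v y \<in> B" using xy by auto
  then show "\<exists>v. (act v x, act v y) \<in> W" using AB(5) by blast
qed

lemma proximal_iff_same_image:
  assumes Y: "dyn_sys Y actY" "equicontinuous Y actY" and \<pi>: "factor_map X act Y actY \<pi>"
    and ret: "uniform_return X act Y \<pi> m" "m \<in> topspace X"
    and xy: "x \<in> topspace X" "y \<in> topspace X"
  shows "proximal X act x y \<longleftrightarrow> \<pi> x = \<pi> y"
proof
  assume "proximal X act x y"
  then have "proximal Y actY (\<pi> x) (\<pi> y)" using proximal_factor[OF \<pi>] xy by blast
  moreover have "\<pi> x \<in> topspace Y" "\<pi> y \<in> topspace Y" using \<pi> xy unfolding factor_map_def by auto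
  ultimately show "\<pi> x = \<pi> y" using proximal_equicontinuous_eq[OF Y] by blast
next
  assume "\<pi> x = \<pi> y"
  moreover have "\<pi> ` topspace X \<subseteq> topspace Y" using \<pi> unfolding factor_map_def by blast
  ultimately show "proximal X act x y" using uniform_return_proximal[OF ret] xy by blast
qed

lemma equicontinuous_trap:
  assumes Z: "dyn_sys Z act" "equicontinuous Z act" and U: "openin Z U" "z \<in> U"
  shows "\<exists>V. openin (prod_topology Z Z) V \<and> (\<forall>x\<in>topspace Z. (x, x) \<in> V) \<and>
           (\<forall>v. \<forall>b\<in>topspace Z. (act v z, act v b) \<in> V \<longrightarrow> b \<in> U)"
proof -
  have "regular_space Z" using Z(1) unfolding dyn_sys_def
    by (intro compact_Hausdorff_imp_regular_space) auto
  moreover have "closedin Z (topspace Z - U)" "z \<in> topspace Z - (topspace Z - U)"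
    using U openin_subset by auto
  ultimately obtain U1 V1 where UV: "openin Z U1" "openin Z V1" "z \<in> U1"
    "topspace Z - U \<subseteq> V1" "disjnt U1 V1"
    unfolding regular_space_def by metis
  define W where "W = U \<times> U \<union> V1 \<times> V1"
  have W: "openin (prod_topology Z Z) W"
    unfolding W_def using U UV(2) by (intro openin_Un) (auto simp: openin_prod_Times_iff)
  have diag: "\<forall>x\<in>topspace Z. (x, x) \<in> W" unfolding W_def using UV(4) by blast
  obtain V where V: "openin (prod_topology Z Z) V \<and> (\<forall>x\<in>topspace Z. (x, x) \<in> V) \<and>
      (\<forall>v. \<forall>(x, y)\<in>V. (act v x, act v y) \<in> W)"
    using Z(2)[unfolded equicontinuous_def, rule_format, OF conjI[OF W diag]] by blast
  then have stays: "\<And>v x y. (x, y) \<in> V \<Longrightarrow> (act v x, act v y) \<in> W" by fast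
  have "b \<in> U" if b: "b \<in> topspace Z" "(act v z, act v b) \<in> V" for v b
  proof -
    have "(act (- v) (act v z), act (- v) (act v b)) \<in> W" using stays b(2) .
    moreover have "z \<in> topspace Z" using U openin_subset by blast
    ultimately have "(z, b) \<in> W" using dyn_sys_inverse[OF Z(1)] b(1) by simp
    then show "b \<in> U" unfolding W_def using UV(3,5) unfolding disjnt_def by blast
  qed
  then show ?thesis using V by blast
qed

text \<open>Move a neighbourhood of \<open>\<pi> x\<^sub>0\<close> close to \<open>m\<close> by one \<open>v\<close>; then \<open>\<rho>(v\<cdot>x)\<close> and \<open>\<rho>(v\<cdot>x\<^sub>0)\<close> are
  close, and equicontinuity transports this back to \<open>\<rho> x\<close> and \<open>\<rho> x\<^sub>0\<close>.\<close>
lemma factor_fibrewise_continuous: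
  assumes \<pi>: "factor_map X act Y actY \<pi>" and ret: "uniform_return X act Y \<pi> m" "m \<in> topspace X"
    and Z: "dyn_sys Z actZ" "equicontinuous Z actZ" and \<rho>: "factor_map X act Z actZ \<rho>"
    and x0: "x0 \<in> topspace X" and U: "openin Z U" "\<rho> x0 \<in> U"
  shows "\<exists>T. openin Y T \<and> \<pi> x0 \<in> T \<and> (\<forall>x\<in>topspace X. \<pi> x \<in> T \<longrightarrow> \<rho> x \<in> U)"
proof -
  have cr: "continuous_map X Z \<rho>" and \<rho>_top: "\<rho> ` topspace X = topspace Z"
    and \<rho>_eq: "\<And>v x. x \<in> topspace X \<Longrightarrow> \<rho> (act v x) = actZ v (\<rho> x)"
    and c0: "\<pi> x0 \<in> topspace Y"
    using \<rho> \<pi> x0 unfolding factor_map_def by auto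
  obtain V where V: "openin (prod_topology Z Z) V" "\<forall>x\<in>topspace Z. (x, x) \<in> V"
    and trap: "\<And>v b. b \<in> topspace Z \<Longrightarrow> (actZ v (\<rho> x0), actZ v b) \<in> V \<Longrightarrow> b \<in> U"
    using equicontinuous_trap[OF Z U] by blast
  have "(\<rho> m, \<rho> m) \<in> V" using V ret(2) \<rho>_top by blast
  then obtain D1 D2 where D: "openin Z D1" "openin Z D2" "\<rho> m \<in> D1" "\<rho> m \<in> D2" "D1 \<times> D2 \<subseteq> V"
    using V unfolding openin_prod_topology_alt by meson
  define A where "A = {x \<in> topspace X. \<rho> x \<in> D1 \<inter> D2}"
  have "openin X A"
    unfolding A_def using D(1,2) by (intro openin_continuous_map_preimage[OF cr]) auto
  then have A: "openin X A \<and> m \<in> A" unfolding A_def using D ret(2) by blast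
  obtain T v where T: "openin Y T" "\<pi> x0 \<in> T"
    and into: "\<forall>x\<in>topspace X. \<pi> x \<in> T \<longrightarrow> act v x \<in> A"
    using ret(1)[unfolded uniform_return_def, rule_format, OF A c0] by blast
  have "\<rho> x \<in> U" if x: "x \<in> topspace X" "\<pi> x \<in> T" for x
  proof -
    have "act v x0 \<in> A" "act v x \<in> A" using into x0 x T(2) by auto
    then have "actZ v (\<rho> x0) \<in> D1" "actZ v (\<rho> x) \<in> D2"
      using \<rho>_eq x0 x(1) unfolding A_def by auto
    then have "(actZ v (\<rho> x0), actZ v (\<rho> x)) \<in> V" using D(5) by blast
    then show "\<rho> x \<in> U" by (rule trap[rotated]) (use x(1) \<rho>_top in blast)
  qed
  then show ?thesis using T by blast
qed

lemma induced_map_continuous: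
  assumes \<pi>: "factor_map X act Y actY \<pi>" and ret: "uniform_return X act Y \<pi> m" "m \<in> topspace X"
    and Z: "dyn_sys Z actZ" "equicontinuous Z actZ" and \<rho>: "factor_map X act Z actZ \<rho>"
    and f: "\<And>x. x \<in> topspace X \<Longrightarrow> f (\<pi> x) = \<rho> x"
  shows "continuous_map Y Z f"
proof -
  have Ytop: "topspace Y = \<pi> ` topspace X" and \<rho>_top: "\<rho> ` topspace X = topspace Z"
    using \<pi> \<rho> unfolding factor_map_def by auto
  show ?thesis
    unfolding continuous_map_def
  proof (intro conjI allI impI)
    show "f \<in> topspace Y \<rightarrow> topspace Z" using Ytop f \<rho>_top by auto
  next
    fix U assume U: "openin Z U"
    show "openin Y {c \<in> topspace Y. f c \<in> U}"
      unfolding openin_subopen[of _ "{c \<in> topspace Y. f c \<in> U}"]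
    proof
      fix c0 assume "c0 \<in> {c \<in> topspace Y. f c \<in> U}"
      then obtain x0 where x0: "x0 \<in> topspace X" "\<pi> x0 = c0" "\<rho> x0 \<in> U"
        using Ytop f by auto
      then obtain T where T: "openin Y T" "c0 \<in> T"
        and into: "\<forall>x\<in>topspace X. \<pi> x \<in> T \<longrightarrow> \<rho> x \<in> U"
        using factor_fibrewise_continuous[OF \<pi> ret Z \<rho> x0(1) U] by blast
      have "T \<subseteq> {c \<in> topspace Y. f c \<in> U}"
      proof
        fix c assume "c \<in> T"
        then have "c \<in> \<pi> ` topspace X" using openin_subset[OF T(1)] Ytop by blast
        then obtain x where x: "x \<in> topspace X" "\<pi> x = c" by (metis imageE)
        then show "c \<in> {c \<in> topspace Y. f c \<in> U}" using into f \<open>c \<in> T\<close> Ytop by auto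
      qed
      then show "\<exists>T. openin Y T \<and> c0 \<in> T \<and> T \<subseteq> {c \<in> topspace Y. f c \<in> U}" using T by blast
    qed
  qed
qed

lemma factor_through_uniform_return:
  assumes act_top: "\<And>v x. x \<in> topspace X \<Longrightarrow> act v x \<in> topspace X"
    and Y: "dyn_sys Y actY" "equicontinuous Y actY" and \<pi>: "factor_map X act Y actY \<pi>"
    and ret: "uniform_return X act Y \<pi> m" "m \<in> topspace X"
    and Z: "dyn_sys Z actZ" "equicontinuous Z actZ" and \<rho>: "factor_map X act Z actZ \<rho>"
  shows "\<exists>f. factor_map Y actY Z actZ f \<and> (\<forall>x\<in>topspace X. \<rho> x = f (\<pi> x))"
proof -
  have Ytop: "topspace Y = \<pi> ` topspace X"
    and \<pi>_eq: "\<And>v x. x \<in> topspace X \<Longrightarrow> \<pi> (act v x) = actY v (\<pi> x)"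
    and Ztop: "topspace Z = \<rho> ` topspace X"
    and \<rho>_eq: "\<And>v x. x \<in> topspace X \<Longrightarrow> \<rho> (act v x) = actZ v (\<rho> x)"
    using \<pi> \<rho> unfolding factor_map_def by auto
  text \<open>\<open>\<rho>\<close> is constant on \<open>\<pi>\<close>-fibres, since these consist of proximal points.\<close>
  have const: "\<rho> x = \<rho> y" if xy: "x \<in> topspace X" "y \<in> topspace X" "\<pi> x = \<pi> y" for x y
  proof (rule proximal_equicontinuous_eq[OF Z])
    have "proximal X act x y" using proximal_iff_same_image[OF Y \<pi> ret xy(1,2)] xy(3) by blast
    then show "proximal Z actZ (\<rho> x) (\<rho> y)" by (rule proximal_factor[OF \<rho> _ xy(1,2)])
    show "\<rho> x \<in> topspace Z" "\<rho> y \<in> topspace Z" unfolding Ztop using xy(1,2) by simp_all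
  qed
  define f where "f c = \<rho> (SOME x. x \<in> topspace X \<and> \<pi> x = c)" for c
  have f: "f (\<pi> x) = \<rho> x" if x: "x \<in> topspace X" for x
  proof -
    have "(SOME y. y \<in> topspace X \<and> \<pi> y = \<pi> x) \<in> topspace X \<and> \<pi> (SOME y. y \<in> topspace X \<and> \<pi> y = \<pi> x) = \<pi> x"
      by (rule someI_ex) (use x in blast)
    then show ?thesis unfolding f_def using const x by blast
  qed
  have "continuous_map Y Z f" by (rule induced_map_continuous[OF \<pi> ret Z \<rho> f])
  moreover have "f ` topspace Y = topspace Z"
    unfolding Ytop Ztop image_image using f by (auto intro: image_cong)
  moreover have "f (actY v c) = actZ v (f c)" if c: "c \<in> topspace Y" for v c
  proof -
    obtain x where x: "x \<in> topspace X" "c = \<pi> x" using c unfolding Ytop by blast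
    then show ?thesis using f act_top \<pi>_eq \<rho>_eq by metis
  qed
  ultimately show ?thesis using f unfolding factor_map_def by auto
qed

lemma max_equicont_factor_uniform_return:
  assumes act_top: "\<And>v x. x \<in> topspace X \<Longrightarrow> act v x \<in> topspace X"
    and Y: "dyn_sys Y actY" "equicontinuous Y actY" and \<pi>: "factor_map X act Y actY \<pi>"
    and ret: "uniform_return X act Y \<pi> m" "m \<in> topspace X"
  shows "max_equicont_factor TYPE('z) X act Y actY \<pi>"
  unfolding max_equicont_factor_def
proof (intro conjI allI impI Y \<pi>)
  fix Z :: "'z topology" and actZ \<rho>
  assume "dyn_sys Z actZ \<and> equicontinuous Z actZ \<and> factor_map X act Z actZ \<rho>"
  then show "\<exists>f. factor_map Y actY Z actZ f \<and> (\<forall>x\<in>topspace X. \<rho> x = f (\<pi> x))"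
    using factor_through_uniform_return[OF act_top Y \<pi> ret] by blast
qed

lemma minimal_rank_one:
  assumes onto: "\<pi> ` topspace X = topspace Y" and y: "y \<in> topspace Y"
    and fibre: "{x \<in> topspace X. \<pi> x = y} = {m}"
  shows "minimal_rank X Y \<pi> = 1"
proof (rule antisym)
  have "minimal_rank X Y \<pi> \<le> ecard {x \<in> topspace X. \<pi> x = y}"
    unfolding minimal_rank_def by (rule INF_lower[OF y])
  then show "minimal_rank X Y \<pi> \<le> 1" unfolding fibre ecard_def by (simp add: one_enat_def)
next
  show "1 \<le> minimal_rank X Y \<pi>"
    unfolding minimal_rank_def
  proof (rule INF_greatest)
    fix c assume "c \<in> topspace Y"
    then have "c \<in> \<pi> ` topspace X" using onto by simp
    then have ne: "{x \<in> topspace X. \<pi> x = c} \<noteq> {}" by blast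
    show "1 \<le> ecard {x \<in> topspace X. \<pi> x = c}"
    proof (cases "finite {x \<in> topspace X. \<pi> x = c}")
      case True
      then have "card {x \<in> topspace X. \<pi> x = c} \<ge> 1" using ne by (simp add: Suc_le_eq card_gt_0_iff)
      then show ?thesis using True unfolding ecard_def by (simp add: one_enat_def)
    qed (simp add: ecard_def)
  qed
qed

section \<open>Lattices and the torus\<close>

lemma openin_torus:
  "openin (torus_topology \<Gamma>) U \<longleftrightarrow> U \<subseteq> range (coset \<Gamma>) \<and> open (coset \<Gamma> -` U)"
  unfolding torus_topology_def by (rule fun_cong[OF topology_inverse'[OF istopology_torus]])

lemma topspace_torus: "topspace (torus_topology \<Gamma>) = range (coset \<Gamma>)"
proof -
  have "openin (torus_topology \<Gamma>) (range (coset \<Gamma>))" unfolding openin_torus by (simp add: vimage_def)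
  moreover have "topspace (torus_topology \<Gamma>) \<subseteq> range (coset \<Gamma>)"
    unfolding topspace_def openin_torus by blast
  ultimately show ?thesis using openin_subset by blast
qed

definition translate_coset :: "'a::ab_group_add \<Rightarrow> 'a set \<Rightarrow> 'a set" where
  "translate_coset d c = (\<lambda>p. p + d) ` c"

lemma torus_act_translate: "torus_act v = translate_coset (v, 0)"
  by (simp add: fun_eq_iff torus_act_def translate_coset_def)

locale lattice =
  fixes \<Gamma> :: "('v::euclidean_space \<times> 'h::{topological_ab_group_add,t2_space}) set"
  assumes zero_in: "0 \<in> \<Gamma>" and add_in: "\<And>a b. a \<in> \<Gamma> \<Longrightarrow> b \<in> \<Gamma> \<Longrightarrow> a + b \<in> \<Gamma>"
    and uminus_in: "\<And>a. a \<in> \<Gamma> \<Longrightarrow> - a \<in> \<Gamma>"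
    and discrete: "\<And>\<gamma>. \<gamma> \<in> \<Gamma> \<Longrightarrow> \<exists>U. open U \<and> U \<inter> \<Gamma> = {\<gamma>}"
begin

lemma diff_in: "a \<in> \<Gamma> \<Longrightarrow> b \<in> \<Gamma> \<Longrightarrow> a - b \<in> \<Gamma>"
  using add_in uminus_in by (metis diff_conv_add_uminus)

lemma coset_eq: "coset \<Gamma> x = coset \<Gamma> y \<longleftrightarrow> x - y \<in> \<Gamma>"
proof
  assume "coset \<Gamma> x = coset \<Gamma> y"
  then have "x \<in> coset \<Gamma> y" using zero_in unfolding coset_def by (metis add.right_neutral image_eqI)
  then show "x - y \<in> \<Gamma>" unfolding coset_def by auto
next
  assume d: "x - y \<in> \<Gamma>"
  have "x + g \<in> coset \<Gamma> y" if "g \<in> \<Gamma>" for g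
    using add_in[OF d that] unfolding coset_def by (intro image_eqI[of _ _ "x - y + g"]) simp_all
  moreover have "y + g \<in> coset \<Gamma> x" if "g \<in> \<Gamma>" for g
    using diff_in[OF that d] unfolding coset_def by (intro image_eqI[of _ _ "g - (x - y)"]) simp_all
  ultimately show "coset \<Gamma> x = coset \<Gamma> y" unfolding coset_def by blast
qed

lemma translate_coset: "translate_coset d (coset \<Gamma> x) = coset \<Gamma> (x + d)"
  unfolding translate_coset_def coset_def image_image by (rule image_cong) (auto simp: algebra_simps)

lemma torus_act_coset: "torus_act v (coset \<Gamma> x) = coset \<Gamma> (x + (v, 0))"
  by (simp add: torus_act_translate translate_coset)

text \<open>Images of open sets are open in the torus, since their saturations are unions of translates.\<close>
lemma openin_coset_image:
  assumes "open A"
  shows "openin (torus_topology \<Gamma>) (coset \<Gamma> ` A)"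
proof -
  have "coset \<Gamma> -` (coset \<Gamma> ` A) = (\<Union>g\<in>\<Gamma>. (\<lambda>y. y + g) ` A)"
  proof (rule set_eqI, rule iffI)
    fix y assume "y \<in> coset \<Gamma> -` (coset \<Gamma> ` A)"
    then obtain a where a: "a \<in> A" "coset \<Gamma> y = coset \<Gamma> a" by blast
    then have "y - a \<in> \<Gamma>" using coset_eq by blast
    moreover have "y = a + (y - a)" by simp
    ultimately show "y \<in> (\<Union>g\<in>\<Gamma>. (\<lambda>y. y + g) ` A)" using a(1) by blast
  next
    fix y assume "y \<in> (\<Union>g\<in>\<Gamma>. (\<lambda>y. y + g) ` A)"
    then obtain g a where ga: "g \<in> \<Gamma>" "a \<in> A" "y = a + g" by blast
    then have "coset \<Gamma> y = coset \<Gamma> a" using coset_eq by simp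
    then show "y \<in> coset \<Gamma> -` (coset \<Gamma> ` A)" using ga by blast
  qed
  then show ?thesis unfolding openin_torus using assms by (auto intro!: open_UN open_image_shift)
qed

text \<open>A discrete subgroup has no accumulation points: two distinct nearby points of \<open>\<Gamma>\<close>
  would have a small nonzero difference in \<open>\<Gamma>\<close>.\<close>
lemma not_islimpt: "\<not> z islimpt \<Gamma>"
proof
  assume z: "z islimpt \<Gamma>"
  obtain U where U: "open U" "U \<inter> \<Gamma> = {0}" using discrete zero_in by blast
  have "0 \<in> U \<inter> \<Gamma>" unfolding U(2) by simp
  then have "0 - 0 \<in> U" by simp
  then obtain A B where AB: "open A" "open B" "0 \<in> A" "0 \<in> B" "\<And>x y. x \<in> A \<Longrightarrow> y \<in> B \<Longrightarrow> x - y \<in> U"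
    by (rule diff_nbhds[OF U(1)]) auto
  define N where "N = {y. y + - z \<in> A \<inter> B}"
  have "open (A \<inter> B)" using AB by auto
  then have "open N" unfolding N_def by (rule open_shift)
  moreover have "z \<in> N" unfolding N_def using AB(3,4) by simp
  ultimately have N: "open N" "z \<in> N" .
  obtain g where g: "g \<in> \<Gamma>" "g \<in> N" "g \<noteq> z" by (rule islimptE[OF z N(2,1)])
  have "z \<in> N - {g}" "open (N - {g})" using N g(3) by (auto simp: open_Diff)
  then obtain g' where g': "g' \<in> \<Gamma>" "g' \<in> N - {g}" "g' \<noteq> z" by (rule islimptE[OF z])
  have "g' - z \<in> A" "g - z \<in> B" using g(2) g'(2) unfolding N_def by auto
  then have "(g' - z) - (g - z) \<in> U" by (rule AB(5))
  then have "g' - g \<in> U" by simp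
  moreover have "g' - g \<in> \<Gamma>" using diff_in g(1) g'(1) by blast
  ultimately have "g' - g \<in> U \<inter> \<Gamma>" by blast
  then have "g' - g = 0" unfolding U(2) by simp
  then show False using g'(2) by simp
qed

lemma lattice_closed: "closed \<Gamma>"
  unfolding closed_limpt using not_islimpt by blast

lemma finite_inter_compact: "compact C \<Longrightarrow> finite (C \<inter> \<Gamma>)"
  by (rule finite_not_islimpt_in_compact) (use not_islimpt in auto)

lemma openin_coset_pairs:
  assumes D: "open D"
  shows "openin (prod_topology (torus_topology \<Gamma>) (torus_topology \<Gamma>))
           {(coset \<Gamma> a, coset \<Gamma> b) | a b. a - b \<in> D}"
  unfolding openin_prod_topology_alt
proof (intro allI impI)
  fix c1 c2 assume "(c1, c2) \<in> {(coset \<Gamma> a, coset \<Gamma> b) | a b. a - b \<in> D}"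
  then obtain a b where ab: "c1 = coset \<Gamma> a" "c2 = coset \<Gamma> b" "a - b \<in> D" by blast
  obtain A B where AB: "open A" "open B" "a \<in> A" "b \<in> B" "\<And>x y. x \<in> A \<Longrightarrow> y \<in> B \<Longrightarrow> x - y \<in> D"
    using diff_nbhds[OF D ab(3)] by blast
  have "coset \<Gamma> ` A \<times> coset \<Gamma> ` B \<subseteq> {(coset \<Gamma> a, coset \<Gamma> b) | a b. a - b \<in> D}"
    using AB(5) by blast
  then show "\<exists>U V. openin (torus_topology \<Gamma>) U \<and> openin (torus_topology \<Gamma>) V \<and> c1 \<in> U \<and> c2 \<in> V
      \<and> U \<times> V \<subseteq> {(coset \<Gamma> a, coset \<Gamma> b) | a b. a - b \<in> D}"
    using AB ab by (intro exI[of _ "coset \<Gamma> ` A"] exI[of _ "coset \<Gamma> ` B"]) (auto intro: openin_coset_image)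
qed

text \<open>The torus is Hausdorff, as \<open>\<Gamma>\<close> is closed: separate \<open>x + \<Gamma> \<noteq> y + \<Gamma>\<close> using the open set of
  pairs whose difference avoids \<open>\<Gamma>\<close>.\<close>
lemma torus_Hausdorff: "Hausdorff_space (torus_topology \<Gamma>)"
  unfolding Hausdorff_space_def topspace_torus
proof (intro allI impI, elim conjE)
  fix c1 c2 assume "c1 \<in> range (coset \<Gamma>)" "c2 \<in> range (coset \<Gamma>)" "c1 \<noteq> c2"
  then obtain a b where "c1 = coset \<Gamma> a" "c2 = coset \<Gamma> b" "a - b \<notin> \<Gamma>" using coset_eq by blast
  then have "(c1, c2) \<in> {(coset \<Gamma> a, coset \<Gamma> b) | a b. a - b \<in> - \<Gamma>}" by blast
  then obtain U V where UV: "openin (torus_topology \<Gamma>) U" "openin (torus_topology \<Gamma>) V" "c1 \<in> U" "c2 \<in> V"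
    and sub: "U \<times> V \<subseteq> {(coset \<Gamma> a, coset \<Gamma> b) | a b. a - b \<in> - \<Gamma>}"
    using openin_coset_pairs[of "- \<Gamma>"] lattice_closed unfolding openin_prod_topology_alt by (meson open_Compl)
  have "disjnt U V"
  proof (rule ccontr)
    assume "\<not> disjnt U V"
    then obtain c where "(c, c) \<in> U \<times> V" unfolding disjnt_def by blast
    then obtain a b where "coset \<Gamma> a = coset \<Gamma> b" "a - b \<notin> \<Gamma>" using sub by blast
    then show False using coset_eq by blast
  qed
  then show "\<exists>U V. openin (torus_topology \<Gamma>) U \<and> openin (torus_topology \<Gamma>) V \<and> c1 \<in> U \<and> c2 \<in> V \<and> disjnt U V"
    using UV by blast
qed

lemma translate_coset_continuous:
  "continuous_map (prod_topology euclidean (torus_topology \<Gamma>)) (torus_topology \<Gamma>)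
     (\<lambda>(d, c). translate_coset d c)"
  unfolding continuous_map_def
proof (intro conjI allI impI)
  show "(\<lambda>(d, c). translate_coset d c) \<in> topspace (prod_topology euclidean (torus_topology \<Gamma>)) \<rightarrow> topspace (torus_topology \<Gamma>)"
    by (auto simp: topspace_torus translate_coset)
next
  fix U assume U: "openin (torus_topology \<Gamma>) U"
  define S where "S = {p \<in> topspace (prod_topology euclidean (torus_topology \<Gamma>)). (case p of (d, c) \<Rightarrow> translate_coset d c) \<in> U}"
  show "openin (prod_topology euclidean (torus_topology \<Gamma>)) S"
    unfolding openin_prod_topology_alt
  proof (intro allI impI)
    fix d0 c0 assume "(d0, c0) \<in> S"
    then obtain z0 where z0: "c0 = coset \<Gamma> z0" "coset \<Gamma> (z0 + d0) \<in> U"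
      unfolding S_def by (auto simp: topspace_torus translate_coset)
    have "open (coset \<Gamma> -` U)" "z0 + d0 \<in> coset \<Gamma> -` U" using U z0 unfolding openin_torus by auto
    then obtain B A where AB: "open B" "open A" "z0 \<in> B" "d0 \<in> A"
      and sum: "\<And>z d. z \<in> B \<Longrightarrow> d \<in> A \<Longrightarrow> coset \<Gamma> (z + d) \<in> U"
      by (rule add_nbhds) auto
    have "A \<times> coset \<Gamma> ` B \<subseteq> S"
      unfolding S_def using sum by (auto simp: topspace_torus translate_coset)
    then show "\<exists>V W. openin euclidean V \<and> openin (torus_topology \<Gamma>) W \<and> d0 \<in> V \<and> c0 \<in> W \<and> V \<times> W \<subseteq> S"
      using AB z0(1) by (intro exI[of _ A] exI[of _ "coset \<Gamma> ` B"]) (auto intro: openin_coset_image)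
  qed
qed

lemma torus_act_continuous:
  "continuous_map (prod_topology euclidean (torus_topology \<Gamma>)) (torus_topology \<Gamma>) (\<lambda>(v, c). torus_act v c)"
proof -
  have "continuous_map (prod_topology euclidean (torus_topology \<Gamma>)) (prod_topology euclidean (torus_topology \<Gamma>))
          (\<lambda>(v::'v, c). ((v, 0::'h), c))"
  proof -
    have "continuous_map euclidean euclidean (\<lambda>v::'v. (v, 0::'h))"
      by (simp add: continuous_on_Pair continuous_on_id continuous_on_const)
    from continuous_map_compose[OF continuous_map_fst[of euclidean "torus_topology \<Gamma>"] this]
    have fst0: "continuous_map (prod_topology euclidean (torus_topology \<Gamma>)) euclidean (\<lambda>p. (fst p :: 'v, 0::'h))"
      by (simp add: o_def)
    show ?thesis
      using continuous_map_pairedI[OF fst0 continuous_map_snd] by (simp add: case_prod_beta')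
  qed
  from continuous_map_compose[OF this translate_coset_continuous]
  show ?thesis by (simp add: o_def case_prod_beta' torus_act_translate)
qed

text \<open>On the compact torus every neighbourhood of the diagonal contains all pairs of cosets whose
  representatives differ by an element of a fixed neighbourhood of \<open>0\<close> (tube lemma applied to
  the continuous map \<open>(d, c) \<mapsto> (c + d, c)\<close>).\<close>
lemma entourage_uniform_nbhd:
  assumes cpt: "compact_space (torus_topology \<Gamma>)"
    and W: "openin (prod_topology (torus_topology \<Gamma>) (torus_topology \<Gamma>)) W"
    and diag: "\<forall>c\<in>topspace (torus_topology \<Gamma>). (c, c) \<in> W"
  shows "\<exists>D. open D \<and> 0 \<in> D \<and> (\<forall>a b. a - b \<in> D \<longrightarrow> (coset \<Gamma> a, coset \<Gamma> b) \<in> W)"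
proof -
  define W' where "W' = {p \<in> topspace (prod_topology euclidean (torus_topology \<Gamma>)).
                           (translate_coset (fst p) (snd p), snd p) \<in> W}"
  have "continuous_map (prod_topology euclidean (torus_topology \<Gamma>)) (prod_topology (torus_topology \<Gamma>) (torus_topology \<Gamma>))
          (\<lambda>p. (translate_coset (fst p) (snd p), snd p))"
    by (intro continuous_map_pairedI translate_coset_continuous[unfolded case_prod_beta] continuous_map_snd)
  then have W'_open: "openin (prod_topology euclidean (torus_topology \<Gamma>)) W'"
    unfolding W'_def using W by (rule openin_continuous_map_preimage)
  have "{0} \<times> topspace (torus_topology \<Gamma>) \<subseteq> W'"
    unfolding W'_def using diag by (auto simp: topspace_torus translate_coset)
  then obtain D V' where "openin euclidean D" "0 \<in> D"
    and "topspace (torus_topology \<Gamma>) \<subseteq> V'" "D \<times> V' \<subseteq> W'"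
    using tube_lemma_right[OF W'_open cpt[unfolded compact_space_def], of 0] by auto
  then have D: "open D" "0 \<in> D" "D \<times> topspace (torus_topology \<Gamma>) \<subseteq> W'" by auto
  have "(coset \<Gamma> a, coset \<Gamma> b) \<in> W" if "a - b \<in> D" for a b
  proof -
    have "coset \<Gamma> b \<in> topspace (torus_topology \<Gamma>)" by (simp add: topspace_torus)
    then have "(a - b, coset \<Gamma> b) \<in> W'" using D(3) that by blast
    then show ?thesis unfolding W'_def by (simp add: translate_coset)
  qed
  then show ?thesis using D(1,2) by blast
qed

text \<open>The \<open>\<real>\<^sup>n\<close>-action on the compact torus is equicontinuous: the pairs of cosets with difference
  in a neighbourhood of \<open>0\<close> form an invariant entourage.\<close>
lemma torus_equicontinuous:
  assumes cpt: "compact_space (torus_topology \<Gamma>)"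
  shows "equicontinuous (torus_topology \<Gamma>) torus_act"
  unfolding equicontinuous_def
proof (intro allI impI, elim conjE)
  fix W assume W: "openin (prod_topology (torus_topology \<Gamma>) (torus_topology \<Gamma>)) W"
    and diag: "\<forall>c\<in>topspace (torus_topology \<Gamma>). (c, c) \<in> W"
  obtain D where D: "open D" "0 \<in> D" and inW: "\<And>a b. a - b \<in> D \<Longrightarrow> (coset \<Gamma> a, coset \<Gamma> b) \<in> W"
    using entourage_uniform_nbhd[OF cpt W diag] by blast
  define V where "V = {(coset \<Gamma> a, coset \<Gamma> b) | a b. a - b \<in> D}"
  have V_open: "openin (prod_topology (torus_topology \<Gamma>) (torus_topology \<Gamma>)) V"
    unfolding V_def using D(1) by (rule openin_coset_pairs)
  have V_diag: "\<forall>c\<in>topspace (torus_topology \<Gamma>). (c, c) \<in> V"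
  proof
    fix c assume "c \<in> topspace (torus_topology \<Gamma>)"
    then obtain a where "c = coset \<Gamma> a" unfolding topspace_torus by blast
    moreover have "a - a \<in> D" using D(2) by simp
    ultimately show "(c, c) \<in> V" unfolding V_def by blast
  qed
  have V_inv: "(torus_act v x, torus_act v y) \<in> W" if xy: "(x, y) \<in> V" for v x y
  proof -
    obtain a b where ab: "x = coset \<Gamma> a" "y = coset \<Gamma> b" "a - b \<in> D" using xy unfolding V_def by blast
    have "(a + (v, 0)) - (b + (v, 0)) \<in> D" using ab(3) by simp
    then show ?thesis unfolding ab torus_act_coset by (rule inW)
  qed
  show "\<exists>V. openin (prod_topology (torus_topology \<Gamma>) (torus_topology \<Gamma>)) V \<and>
      (\<forall>c\<in>topspace (torus_topology \<Gamma>). (c, c) \<in> V) \<and> (\<forall>v. \<forall>(x, y)\<in>V. (torus_act v x, torus_act v y) \<in> W)"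
    using V_open V_diag V_inv by (intro exI[of _ V]) auto
qed

lemma torus_dyn_sys:
  assumes "compact_space (torus_topology \<Gamma>)"
  shows "dyn_sys (torus_topology \<Gamma>) torus_act"
  unfolding dyn_sys_def
  using assms torus_Hausdorff torus_act_continuous
  by (auto simp: topspace_torus torus_act_coset algebra_simps)

end

section \<open>Model sets and the main theorem\<close>

lemma model_set_mem:
  "y \<in> model_set \<Gamma> K x \<longleftrightarrow> (\<exists>g\<in>\<Gamma>. y = fst g + fst x \<and> snd g + snd x \<in> K)"
  unfolding model_set_def by force

lemma set_act_model_set: "set_act v (model_set \<Gamma> K x) = model_set \<Gamma> K (x + (v, 0))"
  by (rule set_eqI) (auto simp: set_act_mem model_set_mem algebra_simps)

context lattice
begin

lemma model_set_shift:
  assumes g: "g \<in> \<Gamma>"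
  shows "model_set \<Gamma> K (x + g) = model_set \<Gamma> K x"
proof (rule set_eqI)
  fix y
  have "(\<exists>h\<in>\<Gamma>. y = fst h + fst (x + g) \<and> snd h + snd (x + g) \<in> K) \<longleftrightarrow>
        (\<exists>h\<in>\<Gamma>. y = fst h + fst x \<and> snd h + snd x \<in> K)"
  proof
    assume "\<exists>h\<in>\<Gamma>. y = fst h + fst (x + g) \<and> snd h + snd (x + g) \<in> K"
    then obtain h where "h \<in> \<Gamma>" "y = fst (h + g) + fst x" "snd (h + g) + snd x \<in> K"
      by (auto simp: algebra_simps)
    then show "\<exists>h\<in>\<Gamma>. y = fst h + fst x \<and> snd h + snd x \<in> K" using add_in[OF _ g] by blast
  next
    assume "\<exists>h\<in>\<Gamma>. y = fst h + fst x \<and> snd h + snd x \<in> K"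
    then obtain h where "h \<in> \<Gamma>" "y = fst (h - g) + fst (x + g)" "snd (h - g) + snd (x + g) \<in> K"
      by (auto simp: algebra_simps)
    then show "\<exists>h\<in>\<Gamma>. y = fst h + fst (x + g) \<and> snd h + snd (x + g) \<in> K" using diff_in[OF _ g] by blast
  qed
  then show "y \<in> model_set \<Gamma> K (x + g) \<longleftrightarrow> y \<in> model_set \<Gamma> K x" unfolding model_set_mem .
qed

end

lemma outside_difference_set:
  fixes K C :: "'g::ab_group_add set"
  assumes y: "y \<notin> (\<lambda>p. fst p - snd p) ` (K \<times> C)" and h: "h \<in> C" and C: "0 \<in> C"
  shows "y + h \<notin> K" "y \<notin> K"
proof -
  show "y + h \<notin> K"
  proof
    assume "y + h \<in> K"
    then have "(y + h) - h \<in> (\<lambda>p. fst p - snd p) ` (K \<times> C)"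
      using h by (intro image_eqI[of _ _ "(y + h, h)"]) auto
    then show False using y by simp
  qed
  show "y \<notin> K"
  proof
    assume "y \<in> K"
    then have "y - 0 \<in> (\<lambda>p. fst p - snd p) ` (K \<times> C)"
      using C by (intro image_eqI[of _ _ "(y, 0)"]) auto
    then show False using y by simp
  qed
qed

text \<open>The setting of the theorem: the hypotheses on \<open>\<Gamma>\<close> and \<open>K\<close> that the argument uses, together
  with the known properties of the torus parametrisation \<open>\<mu>\<close> of the hull of \<open>M = M\<^sub>0\<close>.\<close>
locale model_set_hull = lattice \<Gamma>
  for \<Gamma> :: "('v::euclidean_space \<times> 'h::{topological_ab_group_add,t2_space}) set" +
  fixes K :: "'h set" and \<mu> :: "'v set \<Rightarrow> ('v \<times> 'h) set"
  assumes H_lc: "locally_compact_space (euclidean :: 'h topology)"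
    and perp_dense: "closure (snd ` \<Gamma>) = UNIV"
    and K_compact: "compact K"
    and zero_NS: "0 \<notin> singular_set \<Gamma> K"
    and \<mu>_cont: "continuous_map (subtopology local_topology (dhull (model_set \<Gamma> K 0))) (torus_topology \<Gamma>) \<mu>"
    and \<mu>_ext: "\<And>x. x \<notin> singular_set \<Gamma> K \<Longrightarrow> model_set \<Gamma> K x \<in> dhull (model_set \<Gamma> K 0)
                  \<Longrightarrow> \<mu> (model_set \<Gamma> K x) = coset \<Gamma> x"
    and \<mu>_surj: "\<mu> ` dhull (model_set \<Gamma> K 0) = topspace (torus_topology \<Gamma>)"
    and \<mu>_equiv: "\<And>v L. L \<in> dhull (model_set \<Gamma> K 0) \<Longrightarrow> \<mu> (set_act v L) = torus_act v (\<mu> L)"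
    and \<mu>_inj: "\<And>x. (\<forall>L\<in>dhull (model_set \<Gamma> K 0). \<forall>L'\<in>dhull (model_set \<Gamma> K 0).
                     \<mu> L = coset \<Gamma> x \<and> \<mu> L' = coset \<Gamma> x \<longrightarrow> L = L') \<longleftrightarrow> x \<notin> singular_set \<Gamma> K"
begin

abbreviation M where "M \<equiv> model_set \<Gamma> K 0"
abbreviation hull_topology where "hull_topology \<equiv> subtopology local_topology (dhull M)"

lemma topspace_hull: "topspace hull_topology = dhull M"
  by (simp add: topspace_local)

text \<open>Since \<open>0\<close> is nonsingular, no point of \<open>\<Gamma>\<close> projects to the boundary of the window.\<close>
lemma lattice_not_frontier: "g \<in> \<Gamma> \<Longrightarrow> snd g \<notin> frontier K"
proof
  assume g: "g \<in> \<Gamma>" "snd g \<in> frontier K"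
  have "snd (0::'v \<times> 'h) = snd g + snd (- g)" by simp
  then have "0 \<in> singular_set \<Gamma> K" unfolding singular_set_def using g uminus_in by blast
  then show False using zero_NS by simp
qed

text \<open>Lattice points far from \<open>K\<close> (outside \<open>K - C\<^sub>0\<close> for a compact neighbourhood \<open>C\<^sub>0\<close> of \<open>0\<close>)
  are harmless; the remaining ones are finitely many (discreteness) and none lies over \<open>\<partial>K\<close>.\<close>
lemma window_stable:
  "\<exists>W. open W \<and> 0 \<in> W \<and> (\<forall>g\<in>\<Gamma>. norm (fst g) \<le> r \<longrightarrow> (\<forall>h\<in>W. snd g + h \<in> K \<longleftrightarrow> snd g \<in> K))"
proof -
  have "(0::'h) \<in> topspace euclidean" by simp
  then obtain U0 C0 :: "'h set" where "openin euclidean U0" "compactin euclidean C0" "0 \<in> U0" "U0 \<subseteq> C0"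
    using H_lc unfolding locally_compact_space_def by blast
  then have U0: "open U0" "compact C0" "0 \<in> U0" "U0 \<subseteq> C0"
    using open_openin[of U0] compactin_euclidean_iff[of C0] by blast+
  define D where "D = (\<lambda>p. fst p - snd p) ` (K \<times> C0)"
  have "compact D" unfolding D_def
    by (intro compact_continuous_image compact_Times K_compact U0(2) continuous_intros)
  then have fin: "finite ((cball 0 r \<times> D) \<inter> \<Gamma>)"
    by (intro finite_inter_compact compact_Times compact_cball)
  have K_closed: "closed K" using K_compact by (rule compact_imp_closed)
  define P where "P g = {u. u + snd g \<in> (if snd g \<in> K then interior K else - K)}" for g :: "'v \<times> 'h"
  have P: "open (P g)" "g \<in> \<Gamma> \<Longrightarrow> 0 \<in> P g" for g
  proof -
    show "open (P g)" unfolding P_def using K_closed by (intro open_shift) auto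
    assume "g \<in> \<Gamma>"
    then have "snd g \<notin> K - interior K"
      using lattice_not_frontier K_closed unfolding frontier_def by (simp add: closure_closed)
    then show "0 \<in> P g" unfolding P_def by auto
  qed
  define W where "W = U0 \<inter> (\<Inter>g\<in>(cball 0 r \<times> D) \<inter> \<Gamma>. P g)"
  have "open W" unfolding W_def using U0(1) P(1) fin by (intro open_Int open_INT) auto
  moreover have "0 \<in> W" unfolding W_def using U0(3) P(2) by blast
  moreover have "snd g + h \<in> K \<longleftrightarrow> snd g \<in> K" if g: "g \<in> \<Gamma>" "norm (fst g) \<le> r" and h: "h \<in> W" for g h
  proof (cases "snd g \<in> D")
    case True
    then have "g \<in> (cball 0 r \<times> D) \<inter> \<Gamma>" using g by (cases g) auto
    then have "h \<in> P g" using h unfolding W_def by blast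
    then show ?thesis using interior_subset[of K] unfolding P_def
      by (cases "snd g \<in> K") (auto simp: add.commute)
  next
    case False
    have "h \<in> C0" "0 \<in> C0" using h U0(3,4) unfolding W_def by auto
    then show ?thesis using outside_difference_set[OF False[unfolded D_def]] by blast
  qed
  ultimately show ?thesis by blast
qed

lemma model_set_near_M:
  assumes W: "\<forall>g\<in>\<Gamma>. norm (fst g) \<le> r \<longrightarrow> (\<forall>h\<in>W. snd g + h \<in> K \<longleftrightarrow> snd g \<in> K)"
    and w: "snd w \<in> W" and x: "norm x + norm (fst w) \<le> r"
  shows "x \<in> model_set \<Gamma> K w \<longleftrightarrow> x - fst w \<in> M"
proof -
  have "snd g + snd w \<in> K \<longleftrightarrow> snd g \<in> K" if g: "g \<in> \<Gamma>" "x = fst g + fst w" for g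
  proof -
    have "norm (fst g) \<le> r" using g(2) x norm_triangle_ineq4[of x "fst w"] by simp
    then show ?thesis using W g(1) w by blast
  qed
  then have "x \<in> model_set \<Gamma> K w \<longleftrightarrow> (\<exists>g\<in>\<Gamma>. x = fst g + fst w \<and> snd g \<in> K)"
    unfolding model_set_mem by blast
  also have "\<dots> \<longleftrightarrow> x - fst w \<in> M"
    unfolding model_set_mem by (auto simp: algebra_simps)
  finally show ?thesis .
qed

lemma set_act_M: "set_act v M = model_set \<Gamma> K (v, 0)"
  using set_act_model_set[of v \<Gamma> K 0] by simp

lemma mu_set_act_M: "\<mu> (set_act v M) = coset \<Gamma> (v, 0)"
proof -
  have "\<mu> M = coset \<Gamma> 0" using \<mu>_ext[OF zero_NS dhull_self] .
  then show ?thesis using \<mu>_equiv[OF dhull_self] by (simp add: torus_act_coset)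
qed

lemma hull_approx:
  assumes L: "L \<in> dhull M" and T: "openin (torus_topology \<Gamma>) T" "\<mu> L \<in> T"
    and R: "R > 0" and \<delta>: "\<delta> > 0"
  shows "\<exists>v. loc_close R \<delta> L (set_act v M) \<and> \<mu> (set_act v M) \<in> T"
proof -
  obtain U1 where U1: "openin local_topology U1" "L \<in> U1" "U1 \<subseteq> {L'. loc_close R \<delta> L L'}"
    using open_cylinder[OF R \<delta>] by blast
  have "openin hull_topology {L' \<in> topspace hull_topology. \<mu> L' \<in> T}"
    by (rule openin_continuous_map_preimage[OF \<mu>_cont T(1)])
  then obtain S where S: "openin local_topology S" "{L' \<in> dhull M. \<mu> L' \<in> T} = S \<inter> dhull M"
    unfolding openin_subtopology topspace_hull by blast
  have pre: "L' \<in> S \<longleftrightarrow> \<mu> L' \<in> T" if "L' \<in> dhull M" for L'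
    using S(2) that by (auto simp: set_eq_iff)
  have "L \<in> S \<inter> U1" using pre[OF L] T(2) U1(2) by blast
  moreover have "openin local_topology (S \<inter> U1)" using S(1) U1(1) by blast
  ultimately obtain u where u: "(\<lambda>p. p - u) ` M \<in> S \<inter> U1"
    using L unfolding dhull_def in_closure_of by blast
  have "(\<lambda>p. p - u) ` M = set_act (- u) M" by (simp add: set_act_def)
  then have uSU: "set_act (- u) M \<in> S \<inter> U1" using u by simp
  have "set_act (- u) M \<in> dhull M" by (rule dhull_act[OF dhull_self])
  then have "\<mu> (set_act (- u) M) \<in> T" using pre uSU by blast
  moreover have "loc_close R \<delta> L (set_act (- u) M)" using U1(3) uSU by blast
  ultimately show ?thesis by blast
qed

text \<open>Approximate \<open>L\<close> by a translate \<open>M - u\<close> with \<open>\<mu>(M - u)\<close> in the same neighbourhood; this translate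
  is a model set with a parameter of small internal part, hence close to \<open>M\<close> by stability of the
  window.\<close>
lemma close_to_M:
  assumes R: "R > 0" and \<epsilon>: "\<epsilon> > 0"
  shows "\<exists>Q. open Q \<and> 0 \<in> Q \<and> (\<forall>L\<in>dhull M. \<mu> L \<in> coset \<Gamma> ` Q \<longrightarrow> loc_close R \<epsilon> M L)"
proof -
  obtain W where W: "open W" "0 \<in> W"
    and stable: "\<forall>g\<in>\<Gamma>. norm (fst g) \<le> R + 2 \<longrightarrow> (\<forall>h\<in>W. snd g + h \<in> K \<longleftrightarrow> snd g \<in> K)"
    using window_stable by blast
  define \<delta> where "\<delta> = min (\<epsilon>/2) 1"
  have \<delta>: "\<delta> > 0" "2 * \<delta> \<le> \<epsilon>" "\<delta> \<le> 1" using \<epsilon> unfolding \<delta>_def by auto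
  define Q where "Q = ball (0::'v) \<delta> \<times> W"
  have Q: "open Q" "0 \<in> Q" unfolding Q_def using W \<delta> by (auto simp: open_Times zero_prod_def)
  have "loc_close R \<epsilon> M L" if L: "L \<in> dhull M" "\<mu> L \<in> coset \<Gamma> ` Q" for L
  proof -
    obtain v where v: "loc_close (R + 1) \<delta> L (set_act v M)" "\<mu> (set_act v M) \<in> coset \<Gamma> ` Q"
      using hull_approx[OF L(1) openin_coset_image[OF Q(1)] L(2), of "R + 1" \<delta>] R \<delta> by auto
    then obtain w where w: "w \<in> Q" "coset \<Gamma> (v, 0) = coset \<Gamma> w" by (auto simp: mu_set_act_M)
    have "set_act v M = model_set \<Gamma> K (w + ((v, 0) - w))" by (simp add: set_act_M)
    also have "\<dots> = model_set \<Gamma> K w" using w(2) coset_eq by (intro model_set_shift) simp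
    finally have vM: "set_act v M = model_set \<Gamma> K w" .
    have w_small: "norm (fst w) < \<delta>" "snd w \<in> W" using w(1) unfolding Q_def by auto
    have "x - fst w \<in> M \<longleftrightarrow> x \<in> set_act v M" if "norm x < R + 1" for x
      unfolding vM using model_set_near_M[OF stable w_small(2)] that w_small(1) \<delta>(3) by simp
    then have "loc_close (R + 1) \<delta> M (set_act v M)"
      unfolding loc_close_iff using w_small(1) by blast
    moreover have "loc_close R \<delta> (set_act v M) L"
      by (rule loc_close_mono[OF loc_close_sym[OF v(1)]]) (use \<delta>(3) in auto)
    ultimately have "loc_close R (\<delta> + \<delta>) M L" by (rule loc_close_trans) (use \<delta>(3) in simp)
    then show ?thesis by (rule loc_close_mono) (use \<delta>(2) in auto)
  qed
  then show ?thesis using Q by blast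
qed

text \<open>Density of the internal projection of \<open>\<Gamma>\<close>: every \<open>\<real>\<^sup>n\<close>-orbit in the torus passes through any
  neighbourhood of the coset of \<open>0\<close>.\<close>
lemma orbit_meets_nbhd:
  assumes Q: "open Q" "0 \<in> Q"
  shows "\<exists>v g. g \<in> \<Gamma> \<and> x + (v, 0) + g \<in> Q"
proof -
  obtain A B where AB: "open A" "open B" "(0::'v, 0::'h) \<in> A \<times> B" "A \<times> B \<subseteq> Q"
    using open_prod_elim[OF Q(1)] Q(2) by (metis zero_prod_def)
  have "open {h. h + snd x \<in> B}" using AB(2) by (rule open_shift)
  moreover have "- snd x \<in> {h. h + snd x \<in> B}" using AB(3) by simp
  moreover have "- snd x \<in> closure (snd ` \<Gamma>)" using perp_dense by simp
  ultimately have "{h. h + snd x \<in> B} \<inter> snd ` \<Gamma> \<noteq> {}"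
    using open_Int_closure_eq_empty by blast
  then obtain g where g: "g \<in> \<Gamma>" "snd g + snd x \<in> B" by blast
  have "x + (- (fst x + fst g), 0) + g = (0, snd g + snd x)" by (simp add: prod_eq_iff algebra_simps)
  moreover have "(0, snd g + snd x) \<in> Q" using AB g by auto
  ultimately show ?thesis using g by metis
qed

text \<open>\<open>M\<close> is a uniform return point of \<open>\<mu>\<close>: near any point \<open>x + \<Gamma>\<close> of the torus a single
  translation \<open>v\<close> brings \<open>\<mu>(v\<cdot>L)\<close> close to \<open>0 + \<Gamma>\<close> simultaneously for all \<open>L\<close>, and then
  \<open>close_to_M\<close> applies.\<close>
lemma mu_uniform_return: "uniform_return hull_topology set_act (torus_topology \<Gamma>) \<mu> M"
  unfolding uniform_return_def
proof (intro allI impI ballI, elim conjE)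
  fix A c assume A: "openin hull_topology A" "M \<in> A" and c: "c \<in> topspace (torus_topology \<Gamma>)"
  obtain R \<epsilon> where R: "R > 0" "\<epsilon> > 0" and cyl: "\<forall>L\<in>dhull M. loc_close R \<epsilon> M L \<longrightarrow> L \<in> A"
    using cylinder_in_open[OF A] by blast
  obtain Q where Q: "open Q" "0 \<in> Q" and close: "\<forall>L\<in>dhull M. \<mu> L \<in> coset \<Gamma> ` Q \<longrightarrow> loc_close R \<epsilon> M L"
    using close_to_M[OF R] by blast
  obtain x where x: "c = coset \<Gamma> x" using c unfolding topspace_torus by blast
  obtain v g where vg: "g \<in> \<Gamma>" "x + ((v, 0) + g) \<in> Q"
    using orbit_meets_nbhd[OF Q] by (metis add.assoc)
  define T where "T = coset \<Gamma> ` {y. y + ((v, 0) + g) \<in> Q}"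
  have T_open: "openin (torus_topology \<Gamma>) T" unfolding T_def using Q(1) by (intro openin_coset_image open_shift)
  have cT: "c \<in> T" unfolding T_def x using vg(2) by blast
  have into: "set_act v L \<in> A" if L: "L \<in> topspace hull_topology" "\<mu> L \<in> T" for L
  proof -
    obtain y where y: "\<mu> L = coset \<Gamma> y" "y + ((v, 0) + g) \<in> Q" using L(2) unfolding T_def by blast
    have "\<mu> (set_act v L) = coset \<Gamma> (y + (v, 0))"
      using \<mu>_equiv L(1) y(1) by (simp add: topspace_local torus_act_coset)
    also have "\<dots> = coset \<Gamma> (y + ((v, 0) + g))"
    proof -
      have "(y + (v, 0)) - (y + ((v, 0) + g)) = - g" by (simp add: algebra_simps)
      then show ?thesis using coset_eq uminus_in[OF vg(1)] by simp
    qed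
    finally have "\<mu> (set_act v L) \<in> coset \<Gamma> ` Q" using y(2) by blast
    moreover have "set_act v L \<in> dhull M" using dhull_act L(1) by (simp add: topspace_local)
    ultimately show ?thesis using close cyl by blast
  qed
  show "\<exists>T v. openin (torus_topology \<Gamma>) T \<and> c \<in> T \<and>
      (\<forall>L\<in>topspace hull_topology. \<mu> L \<in> T \<longrightarrow> set_act v L \<in> A)"
    using T_open cT into by (intro exI[of _ T] exI[of _ v]) simp
qed

lemma fibre_at_zero: "{L \<in> topspace hull_topology. \<mu> L = coset \<Gamma> 0} = {M}"
proof -
  have "\<mu> M = coset \<Gamma> 0" using \<mu>_ext[OF zero_NS dhull_self] .
  moreover have "\<forall>L\<in>dhull M. \<forall>L'\<in>dhull M. \<mu> L = coset \<Gamma> 0 \<and> \<mu> L' = coset \<Gamma> 0 \<longrightarrow> L = L'"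
    using \<mu>_inj[of 0] zero_NS by blast
  ultimately show ?thesis using dhull_self by (auto simp: topspace_local)
qed

lemma mu_factor_map: "factor_map hull_topology set_act (torus_topology \<Gamma>) torus_act \<mu>"
  unfolding factor_map_def using \<mu>_cont \<mu>_surj \<mu>_equiv by (simp add: topspace_local)

end

theorem mainTheorem9:
  fixes \<Gamma> :: "('v::euclidean_space \<times> 'h::{topological_ab_group_add, t2_space}) set"
    and K :: "'h set"
    and \<mu> :: "'v set \<Rightarrow> ('v \<times> 'h) set"
  assumes H_lc: "locally_compact_space (euclidean :: 'h topology)"
    and \<Gamma>_subgroup: "0 \<in> \<Gamma>" "\<And>a b. a \<in> \<Gamma> \<Longrightarrow> b \<in> \<Gamma> \<Longrightarrow> a + b \<in> \<Gamma>" "\<And>a. a \<in> \<Gamma> \<Longrightarrow> - a \<in> \<Gamma>"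
    and \<Gamma>_discrete: "\<And>\<gamma>. \<gamma> \<in> \<Gamma> \<Longrightarrow> \<exists>U. open U \<and> U \<inter> \<Gamma> = {\<gamma>}"
    and \<Gamma>_cocompact: "compact_space (torus_topology \<Gamma>)"
    and par_inj: "inj_on fst \<Gamma>" and par_dense: "closure (fst ` \<Gamma>) = UNIV"
    and perp_inj: "inj_on snd \<Gamma>" and perp_dense: "closure (snd ` \<Gamma>) = UNIV"
    and K_compact: "compact K" and K_reg: "closure (interior K) = K"
    and K_stab: "\<And>h. (\<lambda>k. h + k) ` K = K \<Longrightarrow> h = 0"
    and zero_NS: "0 \<notin> singular_set \<Gamma> K"
    and \<mu>_cont: "continuous_map (subtopology local_topology (dhull (model_set \<Gamma> K 0))) (torus_topology \<Gamma>) \<mu>"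
    and \<mu>_ext: "\<And>x. x \<notin> singular_set \<Gamma> K \<Longrightarrow> model_set \<Gamma> K x \<in> dhull (model_set \<Gamma> K 0)
                  \<Longrightarrow> \<mu> (model_set \<Gamma> K x) = coset \<Gamma> x"
    and \<mu>_surj: "\<mu> ` dhull (model_set \<Gamma> K 0) = topspace (torus_topology \<Gamma>)"
    and \<mu>_equiv: "\<And>v L. L \<in> dhull (model_set \<Gamma> K 0) \<Longrightarrow> \<mu> (set_act v L) = torus_act v (\<mu> L)"
    and \<mu>_inj: "\<And>x. (\<forall>L\<in>dhull (model_set \<Gamma> K 0). \<forall>L'\<in>dhull (model_set \<Gamma> K 0).
                     \<mu> L = coset \<Gamma> x \<and> \<mu> L' = coset \<Gamma> x \<longrightarrow> L = L') \<longleftrightarrow> x \<notin> singular_set \<Gamma> K"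
  shows "max_equicont_factor TYPE('z)
           (subtopology local_topology (dhull (model_set \<Gamma> K 0))) set_act
           (torus_topology \<Gamma>) torus_act \<mu>
       \<and> minimal_rank (subtopology local_topology (dhull (model_set \<Gamma> K 0))) (torus_topology \<Gamma>) \<mu> = 1
       \<and> (\<forall>L\<in>dhull (model_set \<Gamma> K 0). \<forall>L'\<in>dhull (model_set \<Gamma> K 0).
            proximal (subtopology local_topology (dhull (model_set \<Gamma> K 0))) set_act L L' \<longleftrightarrow> \<mu> L = \<mu> L')"
proof -
  interpret model_set_hull \<Gamma> K \<mu>
    by unfold_locales (fact \<Gamma>_subgroup \<Gamma>_discrete H_lc perp_dense K_compact zero_NS
        \<mu>_cont \<mu>_ext \<mu>_surj \<mu>_equiv \<mu>_inj)+
  have torus: "dyn_sys (torus_topology \<Gamma>) torus_act" "equicontinuous (torus_topology \<Gamma>) torus_act"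
    by (rule torus_dyn_sys[OF \<Gamma>_cocompact], rule torus_equicontinuous[OF \<Gamma>_cocompact])
  have hull_invariant: "set_act v L \<in> topspace hull_topology" if "L \<in> topspace hull_topology" for v L
    using that unfolding topspace_hull by (rule dhull_act)
  have M_in: "M \<in> topspace hull_topology" unfolding topspace_hull by (rule dhull_self)
  have zero_in_torus: "coset \<Gamma> 0 \<in> topspace (torus_topology \<Gamma>)" by (simp add: topspace_torus)
  have maximal: "max_equicont_factor TYPE('z) hull_topology set_act (torus_topology \<Gamma>) torus_act \<mu>"
    by (rule max_equicont_factor_uniform_return[OF hull_invariant torus mu_factor_map mu_uniform_return M_in])
  have onto: "\<mu> ` topspace hull_topology = topspace (torus_topology \<Gamma>)"
    unfolding topspace_hull by (rule \<mu>_surj)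
  have rank: "minimal_rank hull_topology (torus_topology \<Gamma>) \<mu> = 1"
    by (rule minimal_rank_one[OF onto zero_in_torus fibre_at_zero])
  have proximal: "\<forall>L\<in>dhull M. \<forall>L'\<in>dhull M. proximal hull_topology set_act L L' \<longleftrightarrow> \<mu> L = \<mu> L'"
  proof (intro ballI)
    fix L L' assume "L \<in> dhull M" "L' \<in> dhull M"
    then have "L \<in> topspace hull_topology" "L' \<in> topspace hull_topology"
      unfolding topspace_hull .
    then show "proximal hull_topology set_act L L' \<longleftrightarrow> \<mu> L = \<mu> L'"
      by (rule proximal_iff_same_image[OF torus mu_factor_map mu_uniform_return M_in])
  qed
  show ?thesis by (intro conjI maximal rank proximal)
qed

end
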